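(* Let $a,r$ be real numbers with $0<a<a+r<1$ and let $c=b_{\mathbb{D},2}(a,a+r)$. Let $R$ be a number satisfying $b_{\mathbb{D},2}(a,a-R)=c$ and $-1<a-R<a$. Then \[ B_{\mathbb{D},2}(a;c)\subset\{z:|z-a|<R\}\cap\mathbb{D}. \]
   Context: $\mathbb{D}=\{z\in\mathbb{C}:|z|<1\}$. For $z_1,z_2\in\mathbb{D}$, $b_{\mathbb{D},2}(z_1,z_2)=\sup_{z\in\partial\mathbb{D}}\frac{|z_1-z_2|}{\sqrt{|z_1-z|^2+|z-z_2|^2}}$, and $B_{\mathbb{D},2}(a;c)=\{z\in\mathbb{D}: b_{\mathbb{D},2}(a,z)<c\}$. *)

theory Defs
  imports "HOL-Analysis.Analysis"
begin

definition unit_disk :: "complex set" where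
  "unit_disk = ball 0 1"

definition b_D2 :: "complex \<Rightarrow> complex \<Rightarrow> real" where
  "b_D2 z1 z2 = (SUP z\<in>sphere (0::complex) 1.
      cmod (z1 - z2) / sqrt ((cmod (z1 - z))\<^sup>2 + (cmod (z - z2))\<^sup>2))"

definition B_D2 :: "complex \<Rightarrow> real \<Rightarrow> complex set" where
  "B_D2 a c = {z \<in> unit_disk. b_D2 a z < c}"

end

theory Submission
  imports Defs
begin

text \<open>By the Apollonius identity
  \<open>|u - w|\<^sup>2 + |w - v|\<^sup>2 = 2|w - m|\<^sup>2 + |u - v|\<^sup>2/2\<close> with \<open>m = (u + v)/2\<close>,
  the supremum defining \<open>b(u, v)\<close> is attained at the point of the circle nearest to \<open>m\<close>,
  so \<open>b(u, v) = d / sqrt (2(1 - s/2)\<^sup>2 + d\<^sup>2/2)\<close> with \<open>d = |u - v|\<close> and \<open>s = |u + v|\<close>.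
  If \<open>|z - a| = d \<ge> R\<close>, then \<open>s = |a + z| \<ge> |2a - d|\<close>, and on the real axis the ratio
  \<open>(1 - |2a - d|/2) / d\<close> decreases in \<open>d\<close>; hence \<open>b(a, a - R) \<le> b(a, z)\<close>, and
  \<open>b(a, z) < c = b(a, a - R)\<close> forces \<open>|z - a| < R\<close>.\<close>

lemma norm_diff_sq_sum_eq_midpoint:
  fixes u v w :: "'a::real_inner"
  shows "(norm (u - w))\<^sup>2 + (norm (w - v))\<^sup>2
    = 2 * (norm (w - (1/2) *\<^sub>R (u + v)))\<^sup>2 + (norm (u - v))\<^sup>2 / 2"
  unfolding power2_norm_eq_inner by (simp add: inner_commute algebra_simps field_simps)

definition b_D2_explicit :: "real \<Rightarrow> real \<Rightarrow> real" where
  "b_D2_explicit s d = d / sqrt (2 * (1 - s/2)\<^sup>2 + d\<^sup>2/2)"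

lemma b_D2_eq_explicit:
  fixes u v :: complex
  assumes "cmod (u + v) \<le> 2"
  shows "b_D2 u v = b_D2_explicit (cmod (u + v)) (cmod (u - v))"
proof -
  define m where "m = (u + v) / 2"
  define d where "d = cmod (u - v)"
  define q where "q = (\<lambda>w. cmod (u - v) / sqrt ((cmod (u - w))\<^sup>2 + (cmod (w - v))\<^sup>2))"
  have q_eq: "q w = d / sqrt (2 * (cmod (w - m))\<^sup>2 + d\<^sup>2/2)" for w
    using norm_diff_sq_sum_eq_midpoint[of u w v]
    by (simp add: q_def d_def m_def scaleR_conv_of_real)
  have m_le: "cmod m \<le> 1" using assms by (simp add: m_def norm_divide)
  define w\<^sub>0 where "w\<^sub>0 = (if m = 0 then 1 else m / of_real (cmod m))"
  have w\<^sub>0_sphere: "w\<^sub>0 \<in> sphere 0 1" by (simp add: w\<^sub>0_def norm_divide)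
  have w\<^sub>0_nearest: "cmod (w\<^sub>0 - m) = 1 - cmod m"
  proof (cases "m = 0")
    case False
    then have "w\<^sub>0 - m = of_real (1 / cmod m - 1) * m" by (simp add: w\<^sub>0_def field_simps)
    then have "cmod (w\<^sub>0 - m) = \<bar>1 / cmod m - 1\<bar> * cmod m" by (simp only: norm_mult norm_of_real)
    also have "\<dots> = 1 - cmod m" using False m_le by (simp add: abs_of_nonneg field_simps)
    finally show ?thesis .
  qed (simp add: w\<^sub>0_def)
  have q_le: "q w \<le> q w\<^sub>0" if "w \<in> sphere 0 1" for w
  proof (cases "d = 0")
    case False
    have "1 - cmod m \<le> cmod (w - m)" using that norm_triangle_ineq2[of w m] by simp
    with m_le have "(1 - cmod m)\<^sup>2 \<le> (cmod (w - m))\<^sup>2" by (simp add: power_mono)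
    moreover have "0 < 2 * (1 - cmod m)\<^sup>2 + d\<^sup>2/2" using False by (simp add: add_nonneg_pos)
    ultimately show ?thesis
      unfolding q_eq w\<^sub>0_nearest by (intro divide_left_mono) (auto simp: d_def)
  qed (simp add: q_eq)
  have "b_D2 u v = q w\<^sub>0"
    unfolding b_D2_def q_def[symmetric] using w\<^sub>0_sphere q_le
    by (intro cSup_eq_maximum) auto
  also have "\<dots> = b_D2_explicit (2 * cmod m) d"
    unfolding q_eq w\<^sub>0_nearest b_D2_explicit_def by simp
  finally show ?thesis by (simp add: m_def d_def norm_divide)
qed

corollary b_D2_of_real_eq_explicit:
  fixes x y :: real
  assumes "\<bar>x + y\<bar> \<le> 2"
  shows "b_D2 (complex_of_real x) (complex_of_real y) = b_D2_explicit \<bar>x + y\<bar> \<bar>x - y\<bar>"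
  using b_D2_eq_explicit[of "complex_of_real x" "complex_of_real y"] assms
  by (simp only: of_real_add[symmetric] of_real_diff[symmetric] norm_of_real)

lemma b_D2_explicit_mono:
  assumes "0 < d" "0 < d'" "s' \<le> 2" "d * (1 - s'/2) \<le> d' * (1 - s/2)"
  shows "b_D2_explicit s d \<le> b_D2_explicit s' d'"
proof -
  define p where "p = 1 - s/2"
  define p' where "p' = 1 - s'/2"
  have "(d * p')\<^sup>2 \<le> (d' * p)\<^sup>2"
    using assms by (intro power_mono) (simp_all add: p_def p'_def)
  then have "d\<^sup>2 * (2 * p'\<^sup>2 + d'\<^sup>2/2) \<le> d'\<^sup>2 * (2 * p\<^sup>2 + d\<^sup>2/2)"
    by (simp add: power_mult_distrib algebra_simps)
  then have "d * sqrt (2 * p'\<^sup>2 + d'\<^sup>2/2) \<le> d' * sqrt (2 * p\<^sup>2 + d\<^sup>2/2)"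
    using assms by (metis real_sqrt_le_mono real_sqrt_mult real_sqrt_abs abs_of_pos)
  moreover have "0 < sqrt (2 * p\<^sup>2 + d\<^sup>2/2)" "0 < sqrt (2 * p'\<^sup>2 + d'\<^sup>2/2)"
    using assms by (simp_all add: add_nonneg_pos)
  ultimately show ?thesis
    unfolding b_D2_explicit_def p_def[symmetric] p'_def[symmetric]
    by (simp add: divide_simps mult.commute)
qed

lemma real_ray_ratio_antimono:
  fixes a R d :: real
  assumes "0 < R" "R \<le> d" "0 \<le> a" "a \<le> 1"
  shows "R * (1 - \<bar>2*a - d\<bar>/2) \<le> d * (1 - \<bar>2*a - R\<bar>/2)"
proof -
  have le1: "(R - d) * (1 - a) \<le> 0" and le2: "(R - d) * (1 + a) \<le> 0"
    using assms by (simp_all add: mult_nonpos_nonneg)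
  consider "d \<le> 2*a" | "2*a \<le> R" | "R < 2*a" "2*a < d"
    by linarith
  then have "R * (1 - \<bar>2*a - d\<bar>/2) - d * (1 - \<bar>2*a - R\<bar>/2) \<le> 0"
  proof cases
    case 1
    with assms have "R * (1 - \<bar>2*a - d\<bar>/2) - d * (1 - \<bar>2*a - R\<bar>/2) = (R - d) * (1 - a)"
      by (simp add: field_simps)
    with le1 show ?thesis by simp
  next
    case 2
    with assms have "R * (1 - \<bar>2*a - d\<bar>/2) - d * (1 - \<bar>2*a - R\<bar>/2) = (R - d) * (1 + a)"
      by (simp add: field_simps)
    with le2 show ?thesis by simp
  next
    case 3
    then have "R * (1 - \<bar>2*a - d\<bar>/2) - d * (1 - \<bar>2*a - R\<bar>/2)
        = (R - d) * (1 - a) + R * (2*a - d)"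
      by (simp add: field_simps)
    moreover have "R * (2*a - d) \<le> 0" using assms 3 by (simp add: mult_nonneg_nonpos)
    ultimately show ?thesis using le1 by simp
  qed
  then show ?thesis by simp
qed

lemma b_D2_real_ray_le:
  fixes a R :: real and z :: complex
  assumes "0 \<le> a" "a \<le> 1" "cmod z \<le> 1" "0 < R" "R \<le> cmod (z - complex_of_real a)"
  shows "b_D2 (complex_of_real a) (complex_of_real (a - R)) \<le> b_D2 (complex_of_real a) z"
proof -
  define d where "d = cmod (z - complex_of_real a)"
  define s where "s = cmod (complex_of_real a + z)"
  have d_pos: "0 < d" using assms unfolding d_def by linarith
  have s_le: "s \<le> 2" using norm_triangle_ineq[of "complex_of_real a" z] assms
    by (simp add: s_def)
  have s_ge: "\<bar>2*a - d\<bar> \<le> s"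
    using norm_triangle_ineq3[of "2 * complex_of_real a" "complex_of_real a - z"] assms
    by (simp add: s_def d_def norm_minus_commute)
  have "R * (1 - s/2) \<le> R * (1 - \<bar>2*a - d\<bar>/2)"
    using s_ge assms by (simp add: mult_left_mono)
  also have "\<dots> \<le> d * (1 - \<bar>2*a - R\<bar>/2)"
    using real_ray_ratio_antimono assms by (simp add: d_def)
  finally have ratio: "R * (1 - s/2) \<le> d * (1 - \<bar>2*a - R\<bar>/2)" .
  have "b_D2 (complex_of_real a) (complex_of_real (a - R)) = b_D2_explicit \<bar>2*a - R\<bar> R"
    using b_D2_of_real_eq_explicit[of a "a - R"] s_le s_ge assms by (simp add: d_def)
  also have "\<dots> \<le> b_D2_explicit s d"
    using b_D2_explicit_mono[OF _ d_pos s_le ratio] assms by simp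
  also have "\<dots> = b_D2 (complex_of_real a) z"
    using b_D2_eq_explicit s_le by (simp add: s_def d_def norm_minus_commute)
  finally show ?thesis .
qed

theorem theorem3p17:
  fixes a r R c :: real
  assumes "0 < a" and "a < a + r" and "a + r < 1"
    and "c = b_D2 (complex_of_real a) (complex_of_real (a + r))"
    and "b_D2 (complex_of_real a) (complex_of_real (a - R)) = c"
    and "-1 < a - R" and "a - R < a"
  shows "B_D2 (complex_of_real a) c \<subseteq> {z. cmod (z - complex_of_real a) < R} \<inter> unit_disk"
proof
  fix z assume z: "z \<in> B_D2 (complex_of_real a) c"
  then have z_disk: "cmod z < 1" and z_ball: "b_D2 (complex_of_real a) z < c"
    by (auto simp: B_D2_def unit_disk_def)
  have "cmod (z - complex_of_real a) < R"
  proof (rule ccontr)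
    assume "\<not> cmod (z - complex_of_real a) < R"
    then have "c \<le> b_D2 (complex_of_real a) z"
      using b_D2_real_ray_le[of a z R] z_disk assms by simp
    with z_ball show False by simp
  qed
  with z show "z \<in> {z. cmod (z - complex_of_real a) < R} \<inter> unit_disk"
    by (simp add: B_D2_def)
qed

end
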